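(* For every $n$ and any $(\hat\imath,\hat\jmath)\in\mathcal E$ with associated matrices $B^n_1,B^n_2$, $$\inf_{u^s\in\Delta_J}\Big(1+\big\langle e,(B^n_1)^{-1}B^n_2u^s\big\rangle\Big)>0.$$
   Context: Network: $\mathcal I=\{1,\dots,I\}$, $\mathcal J=\{1,\dots,J\}$, edges $\mathcal E\subset\mathcal I\times\mathcal J$ with the bipartite graph $\mathcal G=(\mathcal I\cup\mathcal J,\mathcal E)$ a tree; $\mathbb R^{\mathcal G}$ denotes arrays in $\mathbb R^{I\times J}$ vanishing off $\mathcal E$. For each $n$, service rates $\mu^n_{ij}>0$ for $(i,j)\in\mathcal E$; $\mathcal J(i)=\{j:(i,j)\in\mathcal E\}$. Let $\mathcal D=\{(\alpha,\beta)\in\mathbb R^I\times\mathbb R^J:\sum_i\alpha_i=\sum_j\beta_j\}$ and $\Psi:\mathcal D\to\mathbb R^{\mathcal G}$ the unique linear map with $\sum_j\Psi_{ij}(\alpha,\beta)=\alpha_i$, $\sum_i\Psi_{ij}(\alpha,\beta)=\beta_j$. For $(\hat\imath,\hat\jmath)\in\mathcal E$, $B^n_1\in\mathbb R^{I\times I}$ and $B^n_2\in\mathbb R^{I\times J}$ are the unique matrices with column $\hat\jmath$ of $B^n_2$ zero and $\sum_{j\in\mathcal J(i)}\mu^n_{ij}\Psi_{ij}(\alpha,\beta)=(B^n_1\alpha+B^n_2\beta)_i$ for all $i$ and $(\alpha,\beta)\in\mathcal D$ ($B^n_1$ is invertible). $e$ is the all-ones vector and $\Delta_J=\{u\in\mathbb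 R^J_+:\langle e,u\rangle=1\}$. *)

theory Defs
  imports "HOL-Analysis.Analysis"
begin

definition bip_adj :: "('i \<times> 'j) set \<Rightarrow> ('i + 'j) \<Rightarrow> ('i + 'j) \<Rightarrow> bool" where
  "bip_adj E u v \<longleftrightarrow> (\<exists>i j. (i, j) \<in> E \<and>
      ((u = Inl i \<and> v = Inr j) \<or> (u = Inr j \<and> v = Inl i)))"

definition bip_connected :: "('i \<times> 'j) set \<Rightarrow> bool" where
  "bip_connected E \<longleftrightarrow> (\<forall>u v. (u, v) \<in> {(x, y). bip_adj E x y}\<^sup>*)"

definition bip_cycle :: "('i \<times> 'j) set \<Rightarrow> ('i + 'j) list \<Rightarrow> bool" where
  "bip_cycle E vs \<longleftrightarrow> length vs \<ge> 3 \<and> distinct vs \<and>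
     (\<forall>k. Suc k < length vs \<longrightarrow> bip_adj E (vs ! k) (vs ! Suc k)) \<and>
     bip_adj E (last vs) (hd vs)"

definition bip_tree :: "('i \<times> 'j) set \<Rightarrow> bool" where
  "bip_tree E \<longleftrightarrow> bip_connected E \<and> (\<nexists>vs. bip_cycle E vs)"

definition Dset :: "((real^'i) \<times> (real^'j)) set" where
  "Dset = {(a, b). sum (\<lambda>i. a $ i) UNIV = sum (\<lambda>j. b $ j) UNIV}"

definition is_Psi :: "('i \<times> 'j) set \<Rightarrow> (real^'i \<Rightarrow> real^'j \<Rightarrow> real^'j^'i) \<Rightarrow> bool" where
  "is_Psi E Psi \<longleftrightarrow> linear (\<lambda>(a, b). Psi a b) \<and>
     (\<forall>(a, b) \<in> Dset.
        (\<forall>i j. (i, j) \<notin> E \<longrightarrow> Psi a b $ i $ j = 0) \<and>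
        (\<forall>i. (\<Sum>j\<in>UNIV. Psi a b $ i $ j) = a $ i) \<and>
        (\<forall>j. (\<Sum>i\<in>UNIV. Psi a b $ i $ j) = b $ j))"

definition simplexJ :: "(real^'j) set" where
  "simplexJ = {u. (\<forall>j. 0 \<le> u $ j) \<and> (\<Sum>j\<in>UNIV. u $ j) = 1}"

end

theory Submission
  imports Defs
begin

text \<open>
  Write \<open>F u = 1 + \<langle>e, B\<^sub>1\<^sup>-\<^sup>1 B\<^sub>2 u\<rangle>\<close> and let \<open>\<delta>\<close> be the unit vector at \<open>\<jmath>\<close>.  With
  \<open>x = B\<^sub>1\<^sup>-\<^sup>1 B\<^sub>2 u\<close> and \<open>b = F u \<cdot> \<delta> - u\<close> the pair \<open>(x, b)\<close> lies in \<open>\<D>\<close> and, as \<open>B\<^sub>2 \<delta> = 0\<close>,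
  \<open>B\<^sub>1 x + B\<^sub>2 b = 0\<close>: the flow \<open>\<Psi>(x, b)\<close> has vanishing \<open>\<mu>\<close>-weighted row sums.  If \<open>F u \<le> 0\<close>,
  its column sums \<open>b\<close> are all nonpositive.  On a tree such a flow must vanish: a positive entry
  forces a negative entry in its column, which forces a positive entry in its row, and so on,
  tracing a non-backtracking walk that would close a cycle.  Then \<open>b = 0\<close>, contradicting
  \<open>\<Sum> b = F u - 1 < 0\<close>.  The same argument with \<open>b = (\<Sum> a) \<cdot> \<delta>\<close> shows that \<open>B\<^sub>1\<close> is
  invertible.  Finally \<open>F\<close> is continuous on the compact simplex, so its infimum is attained.
\<close>

lemma finite_walk_has_cycle:
  fixes v :: "nat \<Rightarrow> 'a::finite"
  assumes adj: "\<And>n. R (v n) (v (Suc n))"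
    and no_loop: "\<And>n. v (Suc n) \<noteq> v n"
    and no_backtrack: "\<And>n. v (Suc (Suc n)) \<noteq> v n"
  shows "\<exists>vs. length vs \<ge> 3 \<and> distinct vs \<and> (\<forall>k. Suc k < length vs \<longrightarrow> R (vs!k) (vs!Suc k))
           \<and> R (last vs) (hd vs)"
proof -
  define Q where "Q = {q. \<exists>p<q. v p = v q}"
  have in_Q: "max a b \<in> Q" if "a \<noteq> b" "v a = v b" for a b
    using that unfolding Q_def by (cases "a < b") (auto simp: max_def intro!: exI[of _ "min a b"])
  have "\<not> inj v"
    using finite_imageD[of v UNIV] by auto
  then obtain a b where "a \<noteq> b" "v a = v b" unfolding inj_def by blast
  define q where "q = (LEAST q. q \<in> Q)"
  have "q \<in> Q" unfolding q_def using in_Q[OF \<open>a \<noteq> b\<close> \<open>v a = v b\<close>] by (rule LeastI)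
  then obtain p where p: "p < q" "v p = v q" unfolding Q_def by blast
  have "inj_on v {p..<q}"
  proof (rule inj_onI, rule ccontr)
    fix x y assume "x \<in> {p..<q}" "y \<in> {p..<q}" "v x = v y" "x \<noteq> y"
    then have "max x y \<in> Q" "max x y < q" using in_Q by auto
    then show False unfolding q_def using not_less_Least by blast
  qed
  moreover have "q \<noteq> Suc p" "q \<noteq> Suc (Suc p)" using no_loop[of p] no_backtrack[of p] p by auto
  moreover have "R (v (q - 1)) (v q)" using adj[of "q - 1"] p by simp
  ultimately show ?thesis using p adj
    by (intro exI[of _ "map v [p..<q]"]) (auto simp: distinct_map last_map hd_map)
qed

lemma bip_tree_no_zigzag:
  fixes x :: "nat \<Rightarrow> 'i::finite" and y :: "nat \<Rightarrow> 'j::finite"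
  assumes tree: "bip_tree E"
    and down: "\<And>k. (x k, y k) \<in> E" and across: "\<And>k. (x (Suc k), y k) \<in> E"
    and x_moves: "\<And>k. x (Suc k) \<noteq> x k" and y_moves: "\<And>k. y (Suc k) \<noteq> y k"
  shows False
proof -
  define v where "v n = (if even n then Inl (x (n div 2)) else Inr (y (n div 2)))" for n
  have "bip_adj E (v n) (v (Suc n))" for n
    using down[of "n div 2"] across[of "n div 2"]
    by (cases "even n") (auto simp: v_def bip_adj_def elim!: oddE)
  moreover have "v (Suc n) \<noteq> v n" for n by (simp add: v_def)
  moreover have "v (Suc (Suc n)) \<noteq> v n" for n
    using x_moves[of "n div 2"] y_moves[of "n div 2"] by (simp add: v_def)
  ultimately have "\<exists>vs. bip_cycle E vs"
    unfolding bip_cycle_def by (rule finite_walk_has_cycle)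
  then show False using tree unfolding bip_tree_def by blast
qed

lemma weighted_row_neg_imp_pos:
  fixes E :: "('i \<times> 'j::finite) set"
  assumes mu_pos: "\<And>j. (i, j) \<in> E \<Longrightarrow> mu i j > (0::real)"
    and off: "\<And>j. (i, j) \<notin> E \<Longrightarrow> phi i j = 0"
    and row: "(\<Sum>j\<in>{j. (i, j) \<in> E}. mu i j * phi i j) = 0"
    and neg: "phi i j < 0"
  shows "\<exists>j'. j' \<noteq> j \<and> phi i j' > 0"
proof (rule ccontr)
  assume no_pos: "\<nexists>j'. j' \<noteq> j \<and> phi i j' > 0"
  let ?S = "{j. (i, j) \<in> E}"
  have "mu i j' * phi i j' \<le> 0" if "j' \<in> ?S - {j}" for j'
    using that mu_pos[of j'] no_pos by (auto intro!: mult_nonneg_nonpos)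
  then have rest: "(\<Sum>j'\<in>?S - {j}. mu i j' * phi i j') \<le> 0" by (rule sum_nonpos)
  have jE: "(i, j) \<in> E" using off neg by force
  have "(\<Sum>j'\<in>?S. mu i j' * phi i j') = mu i j * phi i j + (\<Sum>j'\<in>?S - {j}. mu i j' * phi i j')"
    using jE by (subst sum.remove[of _ j]) auto
  also have "\<dots> < 0"
    using mult_pos_neg[OF mu_pos[OF jE] neg] rest by linarith
  finally show False using row by simp
qed

lemma column_pos_imp_neg:
  fixes phi :: "'i::finite \<Rightarrow> 'j \<Rightarrow> real"
  assumes col: "(\<Sum>i\<in>UNIV. phi i j) \<le> 0" and pos: "phi i j > 0"
  shows "\<exists>i'. i' \<noteq> i \<and> phi i' j < 0"
proof (rule ccontr)
  assume "\<nexists>i'. i' \<noteq> i \<and> phi i' j < 0"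
  then have "(\<Sum>i'\<in>UNIV - {i}. phi i' j) \<ge> 0" by (intro sum_nonneg) force
  moreover have "(\<Sum>i'\<in>UNIV. phi i' j) = phi i j + (\<Sum>i'\<in>UNIV - {i}. phi i' j)"
    by (subst sum.remove[of _ i]) auto
  ultimately show False using col pos by linarith
qed

lemma bip_tree_flow_eq_0_of_nonpos_cols:
  fixes E :: "('i::finite \<times> 'j::finite) set" and phi :: "'i \<Rightarrow> 'j \<Rightarrow> real"
  assumes tree: "bip_tree E"
    and mu_pos: "\<And>i j. (i, j) \<in> E \<Longrightarrow> mu i j > 0"
    and off: "\<And>i j. (i, j) \<notin> E \<Longrightarrow> phi i j = 0"
    and rows: "\<And>i. (\<Sum>j\<in>{j. (i, j) \<in> E}. mu i j * phi i j) = 0"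
    and cols: "\<And>j. (\<Sum>i\<in>UNIV. phi i j) \<le> 0"
  shows "phi i j = 0"
proof (rule ccontr)
  have pos_imp_neg: "\<exists>i'. i' \<noteq> i \<and> phi i' j < 0" if "phi i j > 0" for i j
    using column_pos_imp_neg[of phi j i] cols that by blast
  have neg_imp_pos: "\<exists>j'. j' \<noteq> j \<and> phi i j' > 0" if "phi i j < 0" for i j
    using weighted_row_neg_imp_pos[of i E mu phi, OF mu_pos off rows that] .
  assume "phi i j \<noteq> 0"
  then obtain p0 where p0: "phi (fst p0) (snd p0) > 0"
    using neg_imp_pos[of i j] by (cases "phi i j > 0") (auto intro: that[of "(i, _)"])
  have "\<exists>q. phi (fst q) (snd q) > 0 \<and> fst q \<noteq> fst p \<and> snd q \<noteq> snd p \<and> phi (fst q) (snd p) < 0"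
    if "phi (fst p) (snd p) > 0" for p
    using pos_imp_neg[OF that] neg_imp_pos by fastforce
  then obtain f where f: "\<And>p. phi (fst p) (snd p) > 0 \<Longrightarrow> phi (fst (f p)) (snd (f p)) > 0
      \<and> fst (f p) \<noteq> fst p \<and> snd (f p) \<noteq> snd p \<and> phi (fst (f p)) (snd p) < 0"
    by metis
  define g where "g n = (f ^^ n) p0" for n
  have g_pos: "phi (fst (g n)) (snd (g n)) > 0" for n
    by (induction n) (auto simp: g_def p0 dest: f)
  have g_Suc: "g (Suc n) = f (g n)" for n by (simp add: g_def)
  show False
  proof (rule bip_tree_no_zigzag[OF tree, of "fst \<circ> g" "snd \<circ> g"])
    show "((fst \<circ> g) k, (snd \<circ> g) k) \<in> E" for k
      using off[of "fst (g k)" "snd (g k)"] g_pos[of k] by auto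
    show "((fst \<circ> g) (Suc k), (snd \<circ> g) k) \<in> E" for k using off f[OF g_pos[of k]] g_Suc by force
    show "(fst \<circ> g) (Suc k) \<noteq> (fst \<circ> g) k" "(snd \<circ> g) (Suc k) \<noteq> (snd \<circ> g) k" for k
      using f[OF g_pos[of k]] g_Suc by auto
  qed
qed

lemma bip_tree_flow_eq_0:
  fixes E :: "('i::finite \<times> 'j::finite) set" and phi :: "'i \<Rightarrow> 'j \<Rightarrow> real"
  assumes tree: "bip_tree E"
    and mu_pos: "\<And>i j. (i, j) \<in> E \<Longrightarrow> mu i j > 0"
    and off: "\<And>i j. (i, j) \<notin> E \<Longrightarrow> phi i j = 0"
    and rows: "\<And>i. (\<Sum>j\<in>{j. (i, j) \<in> E}. mu i j * phi i j) = 0"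
    and cols: "(\<forall>j. (\<Sum>i\<in>UNIV. phi i j) \<le> 0) \<or> (\<forall>j. (\<Sum>i\<in>UNIV. phi i j) \<ge> 0)"
  shows "phi i j = 0"
proof (cases "\<forall>j. (\<Sum>i\<in>UNIV. phi i j) \<le> 0")
  case True
  then show ?thesis
    using bip_tree_flow_eq_0_of_nonpos_cols[OF tree mu_pos off rows] by blast
next
  case False
  have "- phi i j = 0"
  proof (rule bip_tree_flow_eq_0_of_nonpos_cols[OF tree mu_pos, where phi="\<lambda>i j. - phi i j"])
    show "- phi i j = 0" if "(i, j) \<notin> E" for i j using off[OF that] by simp
    show "(\<Sum>j\<in>{j. (i, j) \<in> E}. mu i j * - phi i j) = 0" for i
      using rows[of i] by (simp add: sum_negf)
    show "(\<Sum>i\<in>UNIV. - phi i j) \<le> 0" for j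
      using cols False by (simp add: sum_negf)
  qed
  then show ?thesis by simp
qed

lemma matrix_vector_mult_axis_zero_column:
  fixes A :: "real^'j::finite^'i::finite"
  assumes "\<And>i. A $ i $ j = 0"
  shows "A *v axis j c = 0"
  using assms by (simp add: vec_eq_iff matrix_vector_mult_def axis_def if_distrib cong: if_cong)

lemma matrix_inv_right:
  fixes A :: "real^'n::finite^'n"
  assumes "invertible A"
  shows "A *v (matrix_inv A *v y) = y"
proof -
  have "A ** matrix_inv A = mat 1"
    using assms unfolding invertible_def matrix_inv_def by (rule someI2_ex) blast
  then show ?thesis by (simp add: matrix_vector_mul_assoc)
qed

lemma sum_axis: "(\<Sum>j\<in>UNIV. axis k c $ j) = (c::real)"
  by (simp add: axis_def)

lemma axis_in_simplexJ: "axis k 1 \<in> simplexJ"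
  unfolding simplexJ_def using sum_axis[of k 1] by (simp add: axis_def)

lemma compact_simplexJ: "compact (simplexJ :: (real^'j::finite) set)"
proof -
  have "simplexJ = {u::real^'j. \<forall>j. 0 \<le> u $ j} \<inter> {u. (\<Sum>j\<in>UNIV. u $ j) = 1}"
    by (auto simp: simplexJ_def)
  moreover have "closed {u::real^'j. \<forall>j. 0 \<le> u $ j}" "closed {u::real^'j. (\<Sum>j\<in>UNIV. u $ j) = 1}"
    by (intro closed_Collect_all closed_Collect_le closed_Collect_eq continuous_intros)+
  ultimately have "closed (simplexJ :: (real^'j) set)" by (metis closed_Int)
  moreover have "simplexJ \<subseteq> cbox (0::real^'j) 1"
  proof
    fix u :: "real^'j" assume "u \<in> simplexJ"
    then have "\<And>j. 0 \<le> u $ j" "(\<Sum>j\<in>UNIV. u $ j) = 1" by (auto simp: simplexJ_def)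
    then show "u \<in> cbox 0 1"
      using member_le_sum[of _ UNIV "\<lambda>j. u $ j"] by (simp add: interval_cart)
  qed
  ultimately show ?thesis
    using bounded_subset[OF bounded_cbox] compact_eq_bounded_closed by blast
qed

lemma Inf_pos_of_compact:
  fixes f :: "'a::topological_space \<Rightarrow> real"
  assumes "compact S" "S \<noteq> {}" "continuous_on S f" "\<And>x. x \<in> S \<Longrightarrow> f x > 0"
  shows "Inf (f ` S) > 0"
proof -
  obtain x0 where "x0 \<in> S" "\<And>x. x \<in> S \<Longrightarrow> f x0 \<le> f x"
    using continuous_attains_inf[OF assms(1-3)] by blast
  then have "Inf (f ` S) = f x0" by (intro cInf_eq_minimum) auto
  with assms(4)[OF \<open>x0 \<in> S\<close>] show ?thesis by simp
qed

locale tree_network =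
  fixes E :: "('i::finite \<times> 'j::finite) set"
    and mu :: "'i \<Rightarrow> 'j \<Rightarrow> real"
    and Psi :: "real^'i \<Rightarrow> real^'j \<Rightarrow> real^'j^'i"
    and B1 :: "real^'i^'i" and B2 :: "real^'j^'i"
    and jh :: 'j
  assumes tree: "bip_tree E"
    and mu_pos: "\<And>i j. (i, j) \<in> E \<Longrightarrow> mu i j > 0"
    and Psi: "is_Psi E Psi"
    and B2_col: "\<And>i. B2 $ i $ jh = 0"
    and B_def: "\<And>a b i. (a, b) \<in> Dset \<Longrightarrow>
        (\<Sum>j\<in>{j. (i, j) \<in> E}. mu i j * Psi a b $ i $ j) = (B1 *v a + B2 *v b) $ i"
begin

lemma Psi_off: "(a, b) \<in> Dset \<Longrightarrow> (i, j) \<notin> E \<Longrightarrow> Psi a b $ i $ j = 0"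
  and Psi_row: "(a, b) \<in> Dset \<Longrightarrow> (\<Sum>j\<in>UNIV. Psi a b $ i $ j) = a $ i"
  and Psi_col: "(a, b) \<in> Dset \<Longrightarrow> (\<Sum>i\<in>UNIV. Psi a b $ i $ j) = b $ j"
  using Psi unfolding is_Psi_def by fast+

lemma kernel_eq_0:
  assumes D: "(a, b) \<in> Dset" and ker: "B1 *v a + B2 *v b = 0"
    and sign: "(\<forall>j. b $ j \<le> 0) \<or> (\<forall>j. b $ j \<ge> 0)"
  shows "a = 0" "b = 0"
proof -
  have rows: "(\<Sum>j\<in>{j. (i, j) \<in> E}. mu i j * Psi a b $ i $ j) = 0" for i
    using B_def[OF D, of i] ker by simp
  have "Psi a b $ i $ j = 0" for i j
  proof (rule bip_tree_flow_eq_0[OF tree mu_pos, where phi="\<lambda>i j. Psi a b $ i $ j"])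
    show "Psi a b $ i $ j = 0" if "(i, j) \<notin> E" for i j using Psi_off[OF D that] .
    show "(\<Sum>j\<in>{j. (i, j) \<in> E}. mu i j * Psi a b $ i $ j) = 0" for i by (rule rows)
    show "(\<forall>j. (\<Sum>i\<in>UNIV. Psi a b $ i $ j) \<le> 0) \<or> (\<forall>j. (\<Sum>i\<in>UNIV. Psi a b $ i $ j) \<ge> 0)"
      using sign by (simp add: Psi_col[OF D])
  qed
  then show "a = 0" "b = 0"
    using Psi_row[OF D] Psi_col[OF D] by (simp_all add: vec_eq_iff)
qed

lemma B1_invertible: "invertible B1"
proof -
  have "a = 0" if "B1 *v a = 0" for a
  proof (rule kernel_eq_0)
    let ?b = "axis jh (\<Sum>i\<in>UNIV. a $ i)"
    show "(a, ?b) \<in> Dset" unfolding Dset_def by (simp add: sum_axis)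
    show "B1 *v a + B2 *v ?b = 0"
      using that matrix_vector_mult_axis_zero_column[OF B2_col] by simp
    show "(\<forall>j. ?b $ j \<le> 0) \<or> (\<forall>j. ?b $ j \<ge> 0)" by (auto simp: axis_def)
  qed
  then show ?thesis
    unfolding invertible_left_inverse matrix_left_invertible_ker by blast
qed

lemma simplex_value_pos:
  assumes u: "u \<in> simplexJ"
  shows "1 + (1::real^'i) \<bullet> (matrix_inv B1 *v (B2 *v u)) > 0"
proof (rule ccontr)
  define x where "x = matrix_inv B1 *v (B2 *v u)"
  define s where "s = 1 + (\<Sum>i\<in>UNIV. x $ i)"
  assume "\<not> 1 + (1::real^'i) \<bullet> (matrix_inv B1 *v (B2 *v u)) > 0"
  then have s_nonpos: "s \<le> 0" by (simp add: s_def x_def inner_vec_def)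
  have u_nonneg: "\<And>j. 0 \<le> u $ j" and u_sum: "(\<Sum>j\<in>UNIV. u $ j) = 1"
    using u by (auto simp: simplexJ_def)
  define b where "b = axis jh s - u"
  have b_sum: "(\<Sum>j\<in>UNIV. b $ j) = s - 1"
    unfolding b_def using u_sum by (simp add: sum_subtractf sum_axis)
  have "b = 0"
  proof (rule kernel_eq_0)
    show "(x, b) \<in> Dset" unfolding Dset_def using b_sum by (simp add: s_def)
    show "B1 *v x + B2 *v b = 0"
      using matrix_inv_right[OF B1_invertible] matrix_vector_mult_axis_zero_column[OF B2_col]
      by (simp add: x_def b_def matrix_vector_mult_diff_distrib)
    have "b $ j \<le> 0" for j
      using s_nonpos u_nonneg[of j] by (cases "j = jh") (simp_all add: b_def axis_def)
    then show "(\<forall>j. b $ j \<le> 0) \<or> (\<forall>j. b $ j \<ge> 0)" by blast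
  qed
  then show False using b_sum s_nonpos by simp
qed

end

theorem corollary2:
  fixes E :: "('i::finite \<times> 'j::finite) set"
    and mu :: "'i \<Rightarrow> 'j \<Rightarrow> real"
    and Psi :: "real^'i \<Rightarrow> real^'j \<Rightarrow> real^'j^'i"
    and B1 :: "real^'i^'i" and B2 :: "real^'j^'i"
    and ih :: 'i and jh :: 'j
  assumes tree: "bip_tree E"
    and mu_pos: "\<And>i j. (i, j) \<in> E \<Longrightarrow> mu i j > 0"
    and Psi: "is_Psi E Psi"
    and edge: "(ih, jh) \<in> E"
    and B2_col: "\<And>i. B2 $ i $ jh = 0"
    and B_def: "\<And>a b i. (a, b) \<in> Dset \<Longrightarrow>
        (\<Sum>j\<in>{j. (i, j) \<in> E}. mu i j * Psi a b $ i $ j) = (B1 *v a + B2 *v b) $ i"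
  shows "Inf ((\<lambda>u. 1 + (1::real^'i) \<bullet> (matrix_inv B1 *v (B2 *v u))) ` simplexJ) > 0"
proof (rule Inf_pos_of_compact[OF compact_simplexJ])
  interpret tree_network E mu Psi B1 B2 jh
    using tree mu_pos Psi B2_col B_def by unfold_locales
  show "simplexJ \<noteq> {}" using axis_in_simplexJ by blast
  show "continuous_on simplexJ (\<lambda>u. 1 + (1::real^'i) \<bullet> (matrix_inv B1 *v (B2 *v u)))"
    unfolding matrix_vector_mul_assoc
    by (intro continuous_intros matrix_vector_mult_linear_continuous_on)
  show "\<And>u. u \<in> simplexJ \<Longrightarrow> 1 + (1::real^'i) \<bullet> (matrix_inv B1 *v (B2 *v u)) > 0"
    by (rule simplex_value_pos)
qed

end
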